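(* For every locally finite group $G$ there are a locally finite group $G^+$ containing $G$ as a subgroup and an element $a \in G^+$ such that: $G^+ = \langle G \cup \{a\}\rangle_{G^+}$; $a$ does not commute with any $b \in G \setminus \{e_G\}$; $a$ has order $2$; and the subgroups $G$ and $a^{-1}Ga$ commute elementwise in $G^+$.
   Context: A group is locally finite if every finitely generated subgroup is finite. *)

theory Defs
  imports "HOL-Algebra.Algebra"
begin

definition locally_finite_group :: "('a, 'b) monoid_scheme \<Rightarrow> bool" where
  "locally_finite_group G \<longleftrightarrow> group G \<and>
     (\<forall>S. S \<subseteq> carrier G \<and> finite S \<longrightarrow> finite (generate G S))"

end

theory Submission imports Defs begin

text \<open>
  Take for \<open>G\<^sup>+\<close> the wreath product \<open>G \<wr> C\<^sub>2 = (G \<times> G) \<rtimes> C\<^sub>2\<close>, with \<open>G\<close> embedded as the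
  first factor and \<open>a\<close> the involution swapping the two factors. Conjugating the first factor
  by \<open>a\<close> gives the second factor, which commutes with the first; \<open>a\<close> commutes with \<open>(b, 1)\<close>
  only if \<open>(1, b) = (b, 1)\<close>, i.e. \<open>b = 1\<close>. A finite subset of \<open>G \<wr> C\<^sub>2\<close> lies in \<open>K \<wr> C\<^sub>2\<close>
  for the finite subgroup \<open>K\<close> of \<open>G\<close> generated by its coordinates, so local finiteness is
  inherited.
\<close>

lemma locally_finite_groupI:
  assumes "group H"
    and "\<And>S. S \<subseteq> carrier H \<Longrightarrow> finite S \<Longrightarrow> \<exists>E. subgroup E H \<and> finite E \<and> S \<subseteq> E"
  shows "locally_finite_group H"
  unfolding locally_finite_group_def
proof (intro conjI allI impI \<open>group H\<close>)
  fix S assume "S \<subseteq> carrier H \<and> finite S"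
  then obtain E where "subgroup E H" "finite E" "S \<subseteq> E"
    using assms(2) by blast
  then show "finite (generate H S)"
    using group.generate_subgroup_incl[OF \<open>group H\<close>] finite_subset by metis
qed

lemma (in group) ord_eq_2:
  assumes "x \<in> carrier G" "x \<noteq> \<one>" "x \<otimes> x = \<one>"
  shows "ord x = 2"
proof -
  have "x [^] (2::nat) = \<one>"
    using assms by (simp add: numeral_2_eq_2)
  then have "ord x dvd 2"
    using pow_eq_id[OF assms(1)] by simp
  moreover have "ord x \<noteq> 1"
    using ord_eq_1[OF assms(1)] assms(2) by simp
  ultimately show ?thesis
    using dvd_imp_le[of "ord x" 2] by (cases "ord x") auto
qed

text \<open>
  \<open>(x, y, s)\<close> stands for \<open>(x, y) \<cdot> a\<^sup>s\<close> with \<open>a\<close> the swap of coordinates; moving \<open>a\<close> past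
  \<open>(x', y')\<close> exchanges \<open>x'\<close> and \<open>y'\<close>.
\<close>
definition wreath_C2 :: "('a, 'b) monoid_scheme \<Rightarrow> ('a \<times> 'a \<times> bool) monoid" where
  "wreath_C2 G =
     \<lparr>carrier = carrier G \<times> carrier G \<times> UNIV,
      monoid.mult = (\<lambda>(x1, y1, s1) (x2, y2, s2).
        if s1 then (x1 \<otimes>\<^bsub>G\<^esub> y2, y1 \<otimes>\<^bsub>G\<^esub> x2, s1 \<noteq> s2)
        else (x1 \<otimes>\<^bsub>G\<^esub> x2, y1 \<otimes>\<^bsub>G\<^esub> y2, s1 \<noteq> s2)),
      monoid.one = (\<one>\<^bsub>G\<^esub>, \<one>\<^bsub>G\<^esub>, False)\<rparr>"

lemma wreath_C2_simps [simp]: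
  "carrier (wreath_C2 G) = carrier G \<times> carrier G \<times> UNIV"
  "(x1, y1, s1) \<otimes>\<^bsub>wreath_C2 G\<^esub> (x2, y2, s2) =
     (if s1 then (x1 \<otimes>\<^bsub>G\<^esub> y2, y1 \<otimes>\<^bsub>G\<^esub> x2, s1 \<noteq> s2)
      else (x1 \<otimes>\<^bsub>G\<^esub> x2, y1 \<otimes>\<^bsub>G\<^esub> y2, s1 \<noteq> s2))"
  "\<one>\<^bsub>wreath_C2 G\<^esub> = (\<one>\<^bsub>G\<^esub>, \<one>\<^bsub>G\<^esub>, False)"
  by (simp_all add: wreath_C2_def)

lemma (in group) wreath_C2_is_group: "group (wreath_C2 G)"
proof (rule groupI)
  fix u v w assume "u \<in> carrier (wreath_C2 G)" "v \<in> carrier (wreath_C2 G)"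
    "w \<in> carrier (wreath_C2 G)"
  then show "u \<otimes>\<^bsub>wreath_C2 G\<^esub> v \<otimes>\<^bsub>wreath_C2 G\<^esub> w =
             u \<otimes>\<^bsub>wreath_C2 G\<^esub> (v \<otimes>\<^bsub>wreath_C2 G\<^esub> w)"
    by (cases u; cases v; cases w) (auto simp: m_assoc)
next
  fix u assume "u \<in> carrier (wreath_C2 G)"
  then obtain x y s where u: "u = (x, y, s)" "x \<in> carrier G" "y \<in> carrier G"
    by (cases u) auto
  let ?v = "if s then (inv y, inv x, True) else (inv x, inv y, False)"
  have "?v \<in> carrier (wreath_C2 G) \<and> ?v \<otimes>\<^bsub>wreath_C2 G\<^esub> u = \<one>\<^bsub>wreath_C2 G\<^esub>"
    using u by auto
  then show "\<exists>v \<in> carrier (wreath_C2 G). v \<otimes>\<^bsub>wreath_C2 G\<^esub> u = \<one>\<^bsub>wreath_C2 G\<^esub>" by blast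
qed (auto split: prod.splits)

lemma (in group) wreath_C2_inv:
  assumes "x \<in> carrier G" "y \<in> carrier G"
  shows "inv\<^bsub>wreath_C2 G\<^esub> (x, y, s) =
           (if s then (inv y, inv x, True) else (inv x, inv y, False))"
  by (rule group.inv_equality[OF wreath_C2_is_group]) (use assms in auto)

lemma (in group) wreath_C2_subgroup:
  assumes "subgroup K G"
  shows "subgroup (K \<times> K \<times> UNIV) (wreath_C2 G)"
proof -
  interpret K: subgroup K G by fact
  show ?thesis
    by unfold_locales (auto simp: wreath_C2_inv)
qed

lemma locally_finite_wreath_C2:
  assumes "locally_finite_group G"
  shows "locally_finite_group (wreath_C2 G)"
proof -
  interpret group G
    using assms unfolding locally_finite_group_def by blast
  show ?thesis
  proof (rule locally_finite_groupI[OF wreath_C2_is_group])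
    fix S assume S: "S \<subseteq> carrier (wreath_C2 G)" "finite S"
    define T where "T = fst ` S \<union> (fst \<circ> snd) ` S"
    define K where "K = generate G T"
    have T: "T \<subseteq> carrier G" "finite T"
      using S unfolding T_def by auto
    then have "finite K"
      using assms unfolding locally_finite_group_def K_def by blast
    then have "finite (K \<times> K \<times> (UNIV :: bool set))"
      by simp
    moreover have "subgroup (K \<times> K \<times> UNIV) (wreath_C2 G)"
      using T(1) unfolding K_def by (intro wreath_C2_subgroup generate_is_subgroup)
    moreover have "S \<subseteq> K \<times> K \<times> UNIV"
    proof
      fix u assume "u \<in> S"
      then have "fst u \<in> T" "fst (snd u) \<in> T"
        unfolding T_def by auto
      then show "u \<in> K \<times> K \<times> UNIV"
        unfolding K_def by (cases u) (auto intro: generate.incl)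
    qed
    ultimately show "\<exists>E. subgroup E (wreath_C2 G) \<and> finite E \<and> S \<subseteq> E"
      by blast
  qed
qed

definition wreath_C2_embed :: "('a, 'b) monoid_scheme \<Rightarrow> 'a \<Rightarrow> 'a \<times> 'a \<times> bool" where
  "wreath_C2_embed G x = (x, \<one>\<^bsub>G\<^esub>, False)"

definition wreath_C2_swap :: "('a, 'b) monoid_scheme \<Rightarrow> 'a \<times> 'a \<times> bool" where
  "wreath_C2_swap G = (\<one>\<^bsub>G\<^esub>, \<one>\<^bsub>G\<^esub>, True)"

lemma wreath_C2_embed_inj: "inj_on (wreath_C2_embed G) (carrier G)"
  by (simp add: inj_on_def wreath_C2_embed_def)

context group
begin

lemma wreath_C2_swap_carrier: "wreath_C2_swap G \<in> carrier (wreath_C2 G)"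
  by (simp add: wreath_C2_swap_def)

lemma wreath_C2_embed_hom: "wreath_C2_embed G \<in> hom G (wreath_C2 G)"
  by (rule homI) (auto simp: wreath_C2_embed_def)

lemma wreath_C2_swap_inv: "inv\<^bsub>wreath_C2 G\<^esub> wreath_C2_swap G = wreath_C2_swap G"
  by (simp add: wreath_C2_swap_def wreath_C2_inv)

lemma wreath_C2_ord_swap: "group.ord (wreath_C2 G) (wreath_C2_swap G) = 2"
  by (rule group.ord_eq_2[OF wreath_C2_is_group]) (auto simp: wreath_C2_swap_def)

lemma wreath_C2_conj_embed:
  assumes "y \<in> carrier G"
  shows "inv\<^bsub>wreath_C2 G\<^esub> wreath_C2_swap G \<otimes>\<^bsub>wreath_C2 G\<^esub> wreath_C2_embed G y
           \<otimes>\<^bsub>wreath_C2 G\<^esub> wreath_C2_swap G = (\<one>, y, False)"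
  unfolding wreath_C2_swap_inv using assms by (simp add: wreath_C2_swap_def wreath_C2_embed_def)

lemma wreath_C2_embed_commute_conj:
  assumes "x \<in> carrier G" "y \<in> carrier G"
  shows "wreath_C2_embed G x \<otimes>\<^bsub>wreath_C2 G\<^esub>
           (inv\<^bsub>wreath_C2 G\<^esub> wreath_C2_swap G \<otimes>\<^bsub>wreath_C2 G\<^esub> wreath_C2_embed G y
             \<otimes>\<^bsub>wreath_C2 G\<^esub> wreath_C2_swap G) =
         (inv\<^bsub>wreath_C2 G\<^esub> wreath_C2_swap G \<otimes>\<^bsub>wreath_C2 G\<^esub> wreath_C2_embed G y
             \<otimes>\<^bsub>wreath_C2 G\<^esub> wreath_C2_swap G) \<otimes>\<^bsub>wreath_C2 G\<^esub> wreath_C2_embed G x"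
  unfolding wreath_C2_conj_embed[OF assms(2)] using assms by (simp add: wreath_C2_embed_def)

lemma wreath_C2_swap_not_commute:
  assumes "b \<in> carrier G" "b \<noteq> \<one>"
  shows "wreath_C2_swap G \<otimes>\<^bsub>wreath_C2 G\<^esub> wreath_C2_embed G b \<noteq>
           wreath_C2_embed G b \<otimes>\<^bsub>wreath_C2 G\<^esub> wreath_C2_swap G"
  using assms by (simp add: wreath_C2_swap_def wreath_C2_embed_def)

lemma wreath_C2_generate:
  "carrier (wreath_C2 G) =
     generate (wreath_C2 G) (wreath_C2_embed G ` carrier G \<union> {wreath_C2_swap G})"
    (is "_ = generate ?W ?S")
proof
  show "generate ?W ?S \<subseteq> carrier ?W"
    by (intro group.generate_incl[OF wreath_C2_is_group])
      (auto simp: wreath_C2_swap_def wreath_C2_embed_def)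
next
  show "carrier ?W \<subseteq> generate ?W ?S"
  proof
    fix u assume "u \<in> carrier ?W"
    then obtain x y s where u: "u = (x, y, s)" "x \<in> carrier G" "y \<in> carrier G"
      by (cases u) auto
    let ?a = "wreath_C2_swap G" and ?\<phi> = "wreath_C2_embed G"
    have a: "?a \<in> generate ?W ?S" and \<phi>: "\<And>z. z \<in> carrier G \<Longrightarrow> ?\<phi> z \<in> generate ?W ?S"
      by (auto intro: generate.incl)
    have "?\<phi> x \<otimes>\<^bsub>?W\<^esub> (?a \<otimes>\<^bsub>?W\<^esub> ?\<phi> y \<otimes>\<^bsub>?W\<^esub> ?a) \<in> generate ?W ?S"
      using a \<phi> u by (intro generate.eng)
    moreover have "?\<phi> x \<otimes>\<^bsub>?W\<^esub> (?a \<otimes>\<^bsub>?W\<^esub> ?\<phi> y \<otimes>\<^bsub>?W\<^esub> ?a) = (x, y, False)"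
      using u by (simp add: wreath_C2_swap_def wreath_C2_embed_def)
    ultimately have unswapped: "(x, y, False) \<in> generate ?W ?S"
      by simp
    have "(x, y, False) \<otimes>\<^bsub>?W\<^esub> ?a = (x, y, True)"
      using u by (simp add: wreath_C2_swap_def)
    moreover have "(x, y, False) \<otimes>\<^bsub>?W\<^esub> ?a \<in> generate ?W ?S"
      using unswapped a by (rule generate.eng)
    ultimately show "u \<in> generate ?W ?S"
      using unswapped u by (cases s) simp_all
  qed
qed

end

theorem claim2p18:
  fixes G :: "'a monoid"
  assumes "locally_finite_group G"
  shows "\<exists>(H :: ('a \<times> 'a \<times> bool) monoid) \<phi> a.
           locally_finite_group H \<and>
           \<phi> \<in> hom G H \<and> inj_on \<phi> (carrier G) \<and>
           a \<in> carrier H \<and>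
           carrier H = generate H (\<phi> ` carrier G \<union> {a}) \<and>
           (\<forall>b \<in> carrier G - {\<one>\<^bsub>G\<^esub>}. a \<otimes>\<^bsub>H\<^esub> \<phi> b \<noteq> \<phi> b \<otimes>\<^bsub>H\<^esub> a) \<and>
           group.ord H a = 2 \<and>
           (\<forall>x \<in> carrier G. \<forall>y \<in> carrier G.
              \<phi> x \<otimes>\<^bsub>H\<^esub> (inv\<^bsub>H\<^esub> a \<otimes>\<^bsub>H\<^esub> \<phi> y \<otimes>\<^bsub>H\<^esub> a)
              = (inv\<^bsub>H\<^esub> a \<otimes>\<^bsub>H\<^esub> \<phi> y \<otimes>\<^bsub>H\<^esub> a) \<otimes>\<^bsub>H\<^esub> \<phi> x)"
proof -
  interpret group G
    using assms unfolding locally_finite_group_def by blast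
  show ?thesis
    by (intro exI[of _ "wreath_C2 G"] exI[of _ "wreath_C2_embed G"] exI[of _ "wreath_C2_swap G"]
        conjI ballI locally_finite_wreath_C2[OF assms] wreath_C2_embed_hom wreath_C2_embed_inj
        wreath_C2_swap_carrier wreath_C2_generate wreath_C2_swap_not_commute
        wreath_C2_ord_swap wreath_C2_embed_commute_conj)
      auto
qed

end
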